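(* Let $N^{[0]}$ be a $C^0$ net on the grid $T^{[0]}$ given by $s^{[0]}_i=t^{[0]}_i=i$, $i\in\mathbb{Z}$, having the BMSDD property with constant $L$. Let $\boldsymbol{\gamma}^{[s],[k]}=(\boldsymbol{\alpha}^{[s],[k]},\boldsymbol{\beta}^{[s],[k]})\in\mathscr{W}$ and $\boldsymbol{\gamma}^{[t],[k]}=(\boldsymbol{\alpha}^{[t],[k]},\boldsymbol{\beta}^{[t],[k]})\in\mathscr{W}$, $k\ge 0$, satisfy $$\mu^*:=\sup_{k\ge0}\max\{\mu(\boldsymbol{\gamma}^{[s],[k]}),\mu(\boldsymbol{\gamma}^{[t],[k]})\}<\frac{\sqrt3}{3}.$$ Then the corner cutting algorithm for nets of functions (described in the context) starting from $N^{[0]}$ with these weights is convergent, i.e. the sequence of piecewise Coons patches $\mathcal{C}(N^{[k]})$, $k\ge0$, converges uniformly on $\mathbb{R}^2$.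
   Context: Weights: $\mathscr{W}$ is the set of pairs $(\boldsymbol{\alpha},\boldsymbol{\beta})$ of real bi-infinite sequences with $\inf_{i\in\mathbb{Z}}\min\{\alpha_i,1-\beta_i,\beta_i-\alpha_i\}>0$, and $\mu(\boldsymbol{\alpha},\boldsymbol{\beta}):=\sup_{i\in\mathbb{Z}}\max\{\beta_i-\alpha_i,\,1-\beta_{i-1}+\alpha_i\}$. Grids and nets: for strictly increasing bi-infinite real sequences $(s_i)_{i\in\mathbb{Z}}$, $(t_j)_{j\in\mathbb{Z}}$, unbounded above and below, the grid is $T=\bigcup_i\{s_i\}\times\mathbb{R}\ \cup\ \bigcup_j\mathbb{R}\times\{t_j\}$. A net $N=N(T)$ is a function on $T$ (with values in $\mathbb{R}^m$); it is a $C^0$ net if all u-functions $\phi_j(s)=N(s,t_j)$, $\psi_i(t)=N(s_i,t)$ are continuous on $\mathbb{R}$ (and compatible, $\phi_j(s_i)=\psi_i(t_j)$). The piecewise Coons patch $\mathcal{C}(N):\mathbb{R}^2\to\mathbb{R}^m$ is defined on each rectangle $[s_i,s_{i+1}]\times[t_j,t_{j+1}]$, with $h_1=s_{i+1}-s_i$, $h_2=t_{j+1}-t_j$, by $\mathcal{C}(N)(s,t)=\frac{s_{i+1}-s}{h_1}N(s_i,t)+\frac{s-s_i}{h_1}N(s_{i+1},t)+\frac{t_{j+1}-t}{h_2}N(s,t_j)+\frac{t-t_j}{h_2}N(s,t_{j+1})-B(s,t)$, where $B(s,t)=\frac{s_{i+1}-s}{h_1}\big(\frac{t_{j+1}-t}{h_2}N(s_i,t_j)+\frac{t-t_j}{h_2}N(s_i,t_{j+1})\big)+\frac{s-s_i}{h_1}\big(\frac{t_{j+1}-t}{h_2}N(s_{i+1},t_j)+\frac{t-t_j}{h_2}N(s_{i+1},t_{j+1})\big)$.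 BMSDD: for $\sigma_1\ne\sigma_2$, $\tau_1\ne\tau_2$, $[\sigma_1,\sigma_2;\tau_1,\tau_2]N=\frac{N(\sigma_1,\tau_1)+N(\sigma_2,\tau_2)-N(\sigma_2,\tau_1)-N(\sigma_1,\tau_2)}{(\sigma_1-\sigma_2)(\tau_1-\tau_2)}$; a net $N(T)$ has the BMSDD property with constant $L$ if $\|[\sigma_1,\sigma_2;\tau_1,\tau_2]N\|_\infty\le L$ whenever $\sigma_1\ne\sigma_2$, $\tau_1\ne\tau_2$ and all four points $(\sigma_i,\tau_j)$, $i,j\in\{1,2\}$, lie in $T$. Algorithm: given $N^{[k]}$ on the grid $T^{[k]}$ with lines $s^{[k]}_i$, $t^{[k]}_j$, set $s^{[k+1]}_{2i}=(1-\alpha^{[s],[k]}_i)s^{[k]}_i+\alpha^{[s],[k]}_is^{[k]}_{i+1}$, $s^{[k+1]}_{2i+1}=(1-\beta^{[s],[k]}_i)s^{[k]}_i+\beta^{[s],[k]}_is^{[k]}_{i+1}$, and analogously $t^{[k+1]}_{2j},t^{[k+1]}_{2j+1}$ using $\boldsymbol{\gamma}^{[t],[k]}$; let $T^{[k+1]}$ be the grid with lines $s^{[k+1]}_i$, $t^{[k+1]}_j$, and $N^{[k+1]}=\mathcal{C}(N^{[k]})|_{T^{[k+1]}}$. *)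

theory Defs
  imports "HOL-Analysis.Analysis"
begin

definition weights :: "((int \<Rightarrow> real) \<times> (int \<Rightarrow> real)) set" where
  "weights = {(a, b). \<exists>\<delta>>0. \<forall>i. \<delta> \<le> a i \<and> \<delta> \<le> 1 - b i \<and> \<delta> \<le> b i - a i}"

definition mu :: "(int \<Rightarrow> real) \<times> (int \<Rightarrow> real) \<Rightarrow> real" where
  "mu w = (SUP i. max (snd w i - fst w i) (1 - snd w (i - 1) + fst w i))"

definition in_grid :: "(int \<Rightarrow> real) \<Rightarrow> (int \<Rightarrow> real) \<Rightarrow> real \<Rightarrow> real \<Rightarrow> bool" where
  "in_grid s t x y \<longleftrightarrow> x \<in> range s \<or> y \<in> range t"

text \<open>A net is represented by a function on R^2; only its values on the grid matter.\<close>
definition C0_net :: "(int \<Rightarrow> real) \<Rightarrow> (int \<Rightarrow> real) \<Rightarrow> (real \<Rightarrow> real \<Rightarrow> 'a::topological_space) \<Rightarrow> bool" where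
  "C0_net s t N \<longleftrightarrow> (\<forall>j. continuous_on UNIV (\<lambda>x. N x (t j))) \<and> (\<forall>i. continuous_on UNIV (\<lambda>y. N (s i) y))"

definition bmsdd :: "real \<Rightarrow> real \<Rightarrow> real \<Rightarrow> real \<Rightarrow> (real \<Rightarrow> real \<Rightarrow> 'a::real_vector) \<Rightarrow> 'a" where
  "bmsdd \<sigma>1 \<sigma>2 \<tau>1 \<tau>2 N =
     (1 / ((\<sigma>1 - \<sigma>2) * (\<tau>1 - \<tau>2))) *\<^sub>R (N \<sigma>1 \<tau>1 + N \<sigma>2 \<tau>2 - N \<sigma>2 \<tau>1 - N \<sigma>1 \<tau>2)"

definition has_BMSDD :: "(int \<Rightarrow> real) \<Rightarrow> (int \<Rightarrow> real) \<Rightarrow> (real \<Rightarrow> real \<Rightarrow> 'a::euclidean_space) \<Rightarrow> real \<Rightarrow> bool" where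
  "has_BMSDD s t N L \<longleftrightarrow>
     (\<forall>\<sigma>1 \<sigma>2 \<tau>1 \<tau>2. \<sigma>1 \<noteq> \<sigma>2 \<and> \<tau>1 \<noteq> \<tau>2 \<and>
        in_grid s t \<sigma>1 \<tau>1 \<and> in_grid s t \<sigma>1 \<tau>2 \<and> in_grid s t \<sigma>2 \<tau>1 \<and> in_grid s t \<sigma>2 \<tau>2
        \<longrightarrow> infnorm (bmsdd \<sigma>1 \<sigma>2 \<tau>1 \<tau>2 N) \<le> L)"

definition cell :: "(int \<Rightarrow> real) \<Rightarrow> real \<Rightarrow> int" where
  "cell s x = (THE i. s i \<le> x \<and> x < s (i + 1))"

definition coons :: "(int \<Rightarrow> real) \<Rightarrow> (int \<Rightarrow> real) \<Rightarrow> (real \<Rightarrow> real \<Rightarrow> 'a::real_vector) \<Rightarrow> real \<Rightarrow> real \<Rightarrow> 'a" where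
  "coons s t N x y =
    (let i = cell s x; j = cell t y;
         s0 = s i; s1 = s (i + 1); t0 = t j; t1 = t (j + 1);
         h1 = s1 - s0; h2 = t1 - t0;
         a0 = (s1 - x) / h1; a1 = (x - s0) / h1;
         b0 = (t1 - y) / h2; b1 = (y - t0) / h2
     in a0 *\<^sub>R N s0 y + a1 *\<^sub>R N s1 y + b0 *\<^sub>R N x t0 + b1 *\<^sub>R N x t1
        - (a0 *\<^sub>R (b0 *\<^sub>R N s0 t0 + b1 *\<^sub>R N s0 t1) + a1 *\<^sub>R (b0 *\<^sub>R N s1 t0 + b1 *\<^sub>R N s1 t1)))"

definition refine :: "(int \<Rightarrow> real) \<times> (int \<Rightarrow> real) \<Rightarrow> (int \<Rightarrow> real) \<Rightarrow> int \<Rightarrow> real" where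
  "refine w s n =
    (let i = n div 2 in
     if even n then (1 - fst w i) * s i + fst w i * s (i + 1)
     else (1 - snd w i) * s i + snd w i * s (i + 1))"

primrec lines :: "(nat \<Rightarrow> (int \<Rightarrow> real) \<times> (int \<Rightarrow> real)) \<Rightarrow> nat \<Rightarrow> int \<Rightarrow> real" where
  "lines w 0 = (\<lambda>i. real_of_int i)"
| "lines w (Suc k) = refine (w k) (lines w k)"

primrec nets :: "(nat \<Rightarrow> (int \<Rightarrow> real) \<times> (int \<Rightarrow> real)) \<Rightarrow> (nat \<Rightarrow> (int \<Rightarrow> real) \<times> (int \<Rightarrow> real))
    \<Rightarrow> (real \<Rightarrow> real \<Rightarrow> 'a::real_vector) \<Rightarrow> nat \<Rightarrow> real \<Rightarrow> real \<Rightarrow> 'a" where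
  "nets ws wt N0 0 = N0"
| "nets ws wt N0 (Suc k) = coons (lines ws k) (lines wt k) (nets ws wt N0 k)"

end

theory Submission
  imports Defs
begin

(*
  Everything is controlled by the mixed differences N(a,c) + N(b,d) - N(b,c) - N(a,d) of a net.
  On a single cell, the mixed difference of a Coons patch is a combination of three mixed
  differences of the interpolated net whose coefficients cancel the cell size; adding up over
  cells, a bound M |a - b| |c - d| for the net on its grid becomes the bound 3 M |a - b| |c - d|
  for the patch on the whole plane, so the k-th net has constant 3^k M0.
  Inside a cell of size h1 x h2, a net with mixed-difference constant K differs from its
  Coons patch by at most K h1 h2, and each refinement shrinks the cells by the factor mu*.
  Hence consecutive patches differ uniformly by at most M0 (3 mu*^2)^(k+1), a summable bound
  exactly when mu* < sqrt 3 / 3.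
*)

definition grid_lines :: "(int \<Rightarrow> real) \<Rightarrow> bool" where
  "grid_lines s \<longleftrightarrow> (\<forall>i. s i < s (i + 1)) \<and> (\<forall>x. \<exists>i. s i \<le> x) \<and> (\<forall>x. \<exists>i. x < s i)"

lemma grid_lines_strict_mono:
  assumes "grid_lines s"
  shows "strict_mono s"
proof
  fix i j :: int
  assume "i < j"
  then show "s i < s j"
  proof (induction j rule: int_gr_induct)
    case base
    then show ?case using assms by (simp add: grid_lines_def)
  next
    case (step j)
    then show ?case using assms unfolding grid_lines_def by (meson less_trans)
  qed
qed

lemma cell_eqI:
  assumes s: "grid_lines s" and "s i \<le> x" "x < s (i + 1)"
  shows "cell s x = i"
  unfolding cell_def
proof (rule the_equality)
  fix j
  assume "s j \<le> x \<and> x < s (j + 1)"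
  then have "j < i + 1" "i < j + 1"
    using assms strict_mono_less[OF grid_lines_strict_mono[OF s]] by fastforce+
  then show "j = i" by simp
qed (use assms in simp)

lemma cell_exists:
  assumes s: "grid_lines s"
  shows "\<exists>i. s i \<le> x \<and> x < s (i + 1)"
proof (rule ccontr)
  assume "\<nexists>i. s i \<le> x \<and> x < s (i + 1)"
  then have step: "s (i + 1) \<le> x" if "s i \<le> x" for i
    using that by (meson not_less)
  obtain i0 j0 where i0: "s i0 \<le> x" and j0: "x < s j0"
    using s unfolding grid_lines_def by blast
  have below: "s j \<le> x" if "i0 \<le> j" for j
    using that by (induction j rule: int_ge_induct) (use i0 step in auto)
  have "s j0 \<le> s (max i0 j0)"
    using strict_mono_less_eq[OF grid_lines_strict_mono[OF s]] by simp
  with below[of "max i0 j0"] j0 show False by simp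
qed

lemma cell_bounds:
  assumes "grid_lines s"
  shows "s (cell s x) \<le> x" "x < s (cell s x + 1)"
  using cell_exists[OF assms, of x] cell_eqI[OF assms] by auto

lemma cell_mono:
  assumes s: "grid_lines s" and "a \<le> b"
  shows "cell s a \<le> cell s b"
proof -
  have "s (cell s a) < s (cell s b + 1)"
    using cell_bounds[OF s, of a] cell_bounds[OF s, of b] \<open>a \<le> b\<close> by linarith
  then show ?thesis using strict_mono_less[OF grid_lines_strict_mono[OF s]] by simp
qed

lemma norm_additive_le_if_cellwise:
  fixes D :: "real \<Rightarrow> real \<Rightarrow> 'a::real_normed_vector"
  assumes s: "grid_lines s"
    and additive: "\<And>a b c. D a b + D b c = D a c"
    and cellwise: "\<And>i a b. s i \<le> a \<Longrightarrow> a \<le> b \<Longrightarrow> b \<le> s (i + 1)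
      \<Longrightarrow> norm (D a b) \<le> K * (b - a)"
  shows "norm (D a b) \<le> K * \<bar>b - a\<bar>"
proof -
  have ordered: "norm (D a b) \<le> K * (b - a)" if "a \<le> b" "cell s b = cell s a + int n" for n a b
    using that
  proof (induction n arbitrary: a)
    case 0
    then show ?case
      using cellwise[of "cell s a" a b] cell_bounds[OF s, of a] cell_bounds[OF s, of b] by auto
  next
    case (Suc n)
    define c where "c = s (cell s a + 1)"
    have "c < s (cell s a + 1 + 1)"
      using s unfolding c_def grid_lines_def by blast
    then have cell_c: "cell s c = cell s a + 1"
      by (intro cell_eqI[OF s]) (simp_all add: c_def)
    have "c \<le> s (cell s b)"
      unfolding c_def using Suc.prems(2) strict_mono_less_eq[OF grid_lines_strict_mono[OF s]] by simp
    then have "a \<le> c" "c \<le> b"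
      using cell_bounds[OF s, of a] cell_bounds[OF s, of b] by (auto simp: c_def)
    then have bounds: "norm (D a c) \<le> K * (c - a)" "norm (D c b) \<le> K * (b - c)"
      using cellwise[of "cell s a" a c] cell_bounds[OF s, of a] Suc.IH[of c] Suc.prems(2) cell_c
      by (auto simp: c_def)
    have "norm (D a b) \<le> norm (D a c) + norm (D c b)"
      using additive[of a c b] norm_triangle_ineq by metis
    also have "\<dots> \<le> K * (c - a) + K * (b - c)"
      using bounds by (rule add_mono)
    finally show ?case by (simp add: algebra_simps)
  qed
  have le: "norm (D a b) \<le> K * (b - a)" if "a \<le> b" for a b
    using ordered[OF that, of "nat (cell s b - cell s a)"] cell_mono[OF s that] by simp
  have "D b a = - D a b"
    using additive[of a b a] additive[of a a a] by (simp add: eq_neg_iff_add_eq_0 add.commute)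
  then show ?thesis
    using le[of a b] le[of b a] by (cases "a \<le> b") auto
qed

definition mixed_diff :: "(real \<Rightarrow> real \<Rightarrow> 'a::real_vector) \<Rightarrow> real \<Rightarrow> real \<Rightarrow> real \<Rightarrow> real \<Rightarrow> 'a" where
  "mixed_diff G a b c d = G a c + G b d - G b c - G a d"

lemma mixed_diff_add_left: "mixed_diff G a b c d + mixed_diff G b e c d = mixed_diff G a e c d"
  by (simp add: mixed_diff_def algebra_simps)

lemma mixed_diff_add_right: "mixed_diff G a b c d + mixed_diff G a b d e = mixed_diff G a b c e"
  by (simp add: mixed_diff_def algebra_simps)

lemma mixed_diff_bound_nonneg:
  assumes "\<And>a b c d. norm (mixed_diff G a b c d) \<le> K * \<bar>a - b\<bar> * \<bar>c - d\<bar>"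
  shows "0 \<le> K"
proof -
  have "norm (mixed_diff G 1 0 1 0) \<le> K" using assms[of 1 0 1 0] by simp
  then show ?thesis using norm_ge_zero order_trans by blast
qed

definition mixed_diff_bounded_on_grid ::
    "(int \<Rightarrow> real) \<Rightarrow> (int \<Rightarrow> real) \<Rightarrow> (real \<Rightarrow> real \<Rightarrow> 'a::real_normed_vector) \<Rightarrow> real \<Rightarrow> bool" where
  "mixed_diff_bounded_on_grid s t N M \<longleftrightarrow>
     (\<forall>a b c d. in_grid s t a c \<and> in_grid s t a d \<and> in_grid s t b c \<and> in_grid s t b d
        \<longrightarrow> norm (mixed_diff N a b c d) \<le> M * \<bar>a - b\<bar> * \<bar>c - d\<bar>)"

lemma mixed_diff_bounded_on_gridD:
  assumes "mixed_diff_bounded_on_grid s t N M"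
    and "in_grid s t a c" "in_grid s t a d" "in_grid s t b c" "in_grid s t b d"
  shows "norm (mixed_diff N a b c d) \<le> M * \<bar>a - b\<bar> * \<bar>c - d\<bar>"
  using assms unfolding mixed_diff_bounded_on_grid_def by blast

lemma mixed_diff_bounded_on_grid_if_has_BMSDD:
  fixes N :: "real \<Rightarrow> real \<Rightarrow> 'a::euclidean_space"
  assumes "has_BMSDD s t N L"
  shows "mixed_diff_bounded_on_grid s t N (sqrt DIM('a) * L)"
  unfolding mixed_diff_bounded_on_grid_def
proof (intro allI impI)
  fix a b c d
  assume grid: "in_grid s t a c \<and> in_grid s t a d \<and> in_grid s t b c \<and> in_grid s t b d"
  show "norm (mixed_diff N a b c d) \<le> sqrt DIM('a) * L * \<bar>a - b\<bar> * \<bar>c - d\<bar>"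
  proof (cases "a = b \<or> c = d")
    case True
    then show ?thesis by (auto simp: mixed_diff_def)
  next
    case False
    then have "mixed_diff N a b c d = ((a - b) * (c - d)) *\<^sub>R bmsdd a b c d N"
      by (simp add: bmsdd_def mixed_diff_def)
    then have "norm (mixed_diff N a b c d) \<le> \<bar>a - b\<bar> * \<bar>c - d\<bar> * (sqrt DIM('a) * infnorm (bmsdd a b c d N))"
      using norm_le_infnorm[of "bmsdd a b c d N"] by (simp add: abs_mult mult_left_mono)
    also have "\<dots> \<le> \<bar>a - b\<bar> * \<bar>c - d\<bar> * (sqrt DIM('a) * L)"
      using assms grid False unfolding has_BMSDD_def by (intro mult_left_mono) auto
    finally show ?thesis by (simp only: mult_ac)
  qed
qed

definition coons_rect ::
    "real \<Rightarrow> real \<Rightarrow> real \<Rightarrow> real \<Rightarrow> (real \<Rightarrow> real \<Rightarrow> 'a::real_vector) \<Rightarrow> real \<Rightarrow> real \<Rightarrow> 'a" where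
  "coons_rect s0 s1 t0 t1 N x y =
    (let u = (x - s0) / (s1 - s0); v = (y - t0) / (t1 - t0)
     in (1 - u) *\<^sub>R N s0 y + u *\<^sub>R N s1 y + (1 - v) *\<^sub>R N x t0 + v *\<^sub>R N x t1
        - ((1 - u) *\<^sub>R ((1 - v) *\<^sub>R N s0 t0 + v *\<^sub>R N s0 t1)
           + u *\<^sub>R ((1 - v) *\<^sub>R N s1 t0 + v *\<^sub>R N s1 t1)))"

lemma coons_rect_interpolates:
  assumes "s0 \<noteq> s1" "t0 \<noteq> t1" "x = s0 \<or> x = s1 \<or> y = t0 \<or> y = t1"
  shows "coons_rect s0 s1 t0 t1 N x y = N x y"
proof -
  have u: "(s0 - s0) / (s1 - s0) = 0" "(s1 - s0) / (s1 - s0) = 1"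
    and v: "(t0 - t0) / (t1 - t0) = 0" "(t1 - t0) / (t1 - t0) = 1"
    using assms(1,2) by simp_all
  have "coons_rect s0 s1 t0 t1 N s0 y = N s0 y" "coons_rect s0 s1 t0 t1 N s1 y = N s1 y"
    "coons_rect s0 s1 t0 t1 N x t0 = N x t0" "coons_rect s0 s1 t0 t1 N x t1 = N x t1" for x y
    unfolding coons_rect_def Let_def u v by simp_all
  then show ?thesis using assms(3) by auto
qed

lemma coons_eq_coons_rect:
  assumes s: "grid_lines s" and t: "grid_lines t"
    and x: "s i \<le> x" "x \<le> s (i + 1)" and y: "t j \<le> y" "y \<le> t (j + 1)"
  shows "coons s t N x y = coons_rect (s i) (s (i + 1)) (t j) (t (j + 1)) N x y"
proof -
  have gaps: "s k \<noteq> s (k + 1)" "t k \<noteq> t (k + 1)" for k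
    using s t unfolding grid_lines_def by (metis less_irrefl)+
  have on_cell: "coons s t N x y =
      coons_rect (s (cell s x)) (s (cell s x + 1)) (t (cell t y)) (t (cell t y + 1)) N x y"
  proof -
    have flip: "(b - z) / (b - a) = 1 - (z - a) / (b - a)" if "a \<noteq> b" for a b z :: real
      using that by (simp add: field_simps)
    show ?thesis
      by (simp only: coons_def coons_rect_def Let_def flip[OF gaps(1)] flip[OF gaps(2)])
  qed
  \<comment> \<open>Cells are half-open, so on the upper edges \<open>coons\<close> uses the next cell; both patches
    reproduce \<open>N\<close> there.\<close>
  consider "x < s (i + 1)" "y < t (j + 1)" | "x = s (i + 1)" | "y = t (j + 1)"
    using x y by linarith
  then show ?thesis
  proof cases
    case 1
    then show ?thesis using on_cell cell_eqI[OF s] cell_eqI[OF t] x y by simp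
  next
    case 2
    moreover have "s (i + 1) < s (i + 1 + 1)"
      using s unfolding grid_lines_def by blast
    ultimately have cell: "cell s x = i + 1"
      by (intro cell_eqI[OF s]) simp_all
    have "coons s t N x y = N x y"
      unfolding on_cell cell using 2 by (intro coons_rect_interpolates[OF gaps(1) gaps(2)]) simp
    moreover have "coons_rect (s i) (s (i + 1)) (t j) (t (j + 1)) N x y = N x y"
      using 2 by (intro coons_rect_interpolates[OF gaps(1) gaps(2)]) simp
    ultimately show ?thesis by simp
  next
    case 3
    moreover have "t (j + 1) < t (j + 1 + 1)"
      using t unfolding grid_lines_def by blast
    ultimately have cell: "cell t y = j + 1"
      by (intro cell_eqI[OF t]) simp_all
    have "coons s t N x y = N x y"
      unfolding on_cell cell using 3 by (intro coons_rect_interpolates[OF gaps(1) gaps(2)]) simp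
    moreover have "coons_rect (s i) (s (i + 1)) (t j) (t (j + 1)) N x y = N x y"
      using 3 by (intro coons_rect_interpolates[OF gaps(1) gaps(2)]) simp
    ultimately show ?thesis by simp
  qed
qed

lemma mixed_diff_bilinear_blend:
  fixes N :: "real \<Rightarrow> real \<Rightarrow> 'a::real_vector"
  shows "mixed_diff (\<lambda>x y. (1 - u x) *\<^sub>R N s0 y + u x *\<^sub>R N s1 y + (1 - v y) *\<^sub>R N x t0 + v y *\<^sub>R N x t1
      - ((1 - u x) *\<^sub>R ((1 - v y) *\<^sub>R N s0 t0 + v y *\<^sub>R N s0 t1)
         + u x *\<^sub>R ((1 - v y) *\<^sub>R N s1 t0 + v y *\<^sub>R N s1 t1))) a b c d
   = (u a - u b) *\<^sub>R mixed_diff N s1 s0 c d + (v c - v d) *\<^sub>R mixed_diff N a b t1 t0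
     - ((u a - u b) * (v c - v d)) *\<^sub>R mixed_diff N s1 s0 t1 t0"
  by (simp add: mixed_diff_def algebra_simps)

lemma mixed_diff_coons_rect:
  "mixed_diff (coons_rect s0 s1 t0 t1 N) a b c d =
     ((a - b) / (s1 - s0)) *\<^sub>R mixed_diff N s1 s0 c d + ((c - d) / (t1 - t0)) *\<^sub>R mixed_diff N a b t1 t0
     - ((a - b) * (c - d) / ((s1 - s0) * (t1 - t0))) *\<^sub>R mixed_diff N s1 s0 t1 t0"
proof -
  define u where "u x = (x - s0) / (s1 - s0)" for x
  define v where "v y = (y - t0) / (t1 - t0)" for y
  have "coons_rect s0 s1 t0 t1 N = (\<lambda>x y. (1 - u x) *\<^sub>R N s0 y + u x *\<^sub>R N s1 y + (1 - v y) *\<^sub>R N x t0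
      + v y *\<^sub>R N x t1 - ((1 - u x) *\<^sub>R ((1 - v y) *\<^sub>R N s0 t0 + v y *\<^sub>R N s0 t1)
      + u x *\<^sub>R ((1 - v y) *\<^sub>R N s1 t0 + v y *\<^sub>R N s1 t1)))"
    by (intro ext) (simp only: coons_rect_def Let_def u_def v_def)
  moreover have "u a - u b = (a - b) / (s1 - s0)" "v c - v d = (c - d) / (t1 - t0)"
    by (simp_all add: u_def v_def diff_divide_distrib)
  ultimately show ?thesis by (simp only: mixed_diff_bilinear_blend times_divide_times_eq)
qed

lemma norm_scaleR_divide_le:
  assumes "0 < h" "norm X \<le> M * h * r"
  shows "norm ((q / h) *\<^sub>R X) \<le> M * \<bar>q\<bar> * r"
proof -
  have "norm ((q / h) *\<^sub>R X) = \<bar>q\<bar> / h * norm X" using assms(1) by (simp add: abs_divide)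
  also have "\<dots> \<le> \<bar>q\<bar> / h * (M * h * r)" using assms by (intro mult_left_mono) auto
  also have "\<dots> = M * \<bar>q\<bar> * r" using assms(1) by simp
  finally show ?thesis .
qed

lemma norm_mixed_diff_coons_rect_le:
  assumes "s0 < s1" "t0 < t1" "s0 \<in> range s" "s1 \<in> range s" "t0 \<in> range t" "t1 \<in> range t"
    and N: "mixed_diff_bounded_on_grid s t N M"
  shows "norm (mixed_diff (coons_rect s0 s1 t0 t1 N) a b c d) \<le> 3 * M * \<bar>a - b\<bar> * \<bar>c - d\<bar>"
proof -
  have grid: "norm (mixed_diff N a b c d) \<le> M * \<bar>a - b\<bar> * \<bar>c - d\<bar>"
    if "in_grid s t a c" "in_grid s t a d" "in_grid s t b c" "in_grid s t b d" for a b c d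
    using N that by (rule mixed_diff_bounded_on_gridD)
  have corners: "in_grid s t s0 y" "in_grid s t s1 y" "in_grid s t x t0" "in_grid s t x t1" for x y
    using assms(3-6) by (simp_all add: in_grid_def)
  have bound1: "norm (((a - b) / (s1 - s0)) *\<^sub>R mixed_diff N s1 s0 c d) \<le> M * \<bar>a - b\<bar> * \<bar>c - d\<bar>"
  proof (rule norm_scaleR_divide_le)
    show "norm (mixed_diff N s1 s0 c d) \<le> M * (s1 - s0) * \<bar>c - d\<bar>"
      using grid[where a = s1 and b = s0, OF corners(2,2,1,1)] assms(1) by simp
  qed (use assms(1) in simp)
  have bound2: "norm (((c - d) / (t1 - t0)) *\<^sub>R mixed_diff N a b t1 t0) \<le> M * \<bar>c - d\<bar> * \<bar>a - b\<bar>"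
  proof (rule norm_scaleR_divide_le)
    show "norm (mixed_diff N a b t1 t0) \<le> M * (t1 - t0) * \<bar>a - b\<bar>"
      using grid[where c = t1 and d = t0, OF corners(4,3,4,3)] assms(2) by (simp add: mult_ac)
  qed (use assms(2) in simp)
  have bound3: "norm (((a - b) * (c - d) / ((s1 - s0) * (t1 - t0))) *\<^sub>R mixed_diff N s1 s0 t1 t0)
      \<le> M * \<bar>(a - b) * (c - d)\<bar> * 1"
  proof (rule norm_scaleR_divide_le)
    show "norm (mixed_diff N s1 s0 t1 t0) \<le> M * ((s1 - s0) * (t1 - t0)) * 1"
      using grid[where a = s1 and b = s0 and c = t1 and d = t0, OF corners(2,2,1,1)] assms(1,2) by (simp add: mult_ac)
  qed (use assms(1,2) in simp)
  have "M * \<bar>c - d\<bar> * \<bar>a - b\<bar> = M * \<bar>a - b\<bar> * \<bar>c - d\<bar>"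
    "M * \<bar>(a - b) * (c - d)\<bar> * 1 = M * \<bar>a - b\<bar> * \<bar>c - d\<bar>"
    by (simp_all add: abs_mult mult_ac)
  moreover
  let ?T1 = "((a - b) / (s1 - s0)) *\<^sub>R mixed_diff N s1 s0 c d"
  let ?T2 = "((c - d) / (t1 - t0)) *\<^sub>R mixed_diff N a b t1 t0"
  let ?T3 = "((a - b) * (c - d) / ((s1 - s0) * (t1 - t0))) *\<^sub>R mixed_diff N s1 s0 t1 t0"
  have "norm (mixed_diff (coons_rect s0 s1 t0 t1 N) a b c d) \<le> norm ?T1 + norm ?T2 + norm ?T3"
    unfolding mixed_diff_coons_rect
    using norm_triangle_ineq4[of "?T1 + ?T2" ?T3] norm_triangle_ineq[of ?T1 ?T2] by linarith
  ultimately show ?thesis using bound1 bound2 bound3 by linarith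
qed

lemma norm_mixed_diff_coons_le:
  assumes s: "grid_lines s" and t: "grid_lines t" and N: "mixed_diff_bounded_on_grid s t N M"
  shows "norm (mixed_diff (coons s t N) a b c d) \<le> 3 * M * \<bar>a - b\<bar> * \<bar>c - d\<bar>"
proof -
  have less: "s i < s (i + 1)" "t i < t (i + 1)" for i
    using s t by (auto simp: grid_lines_def)
  have in_cells: "norm (mixed_diff (coons s t N) a b c d) \<le> 3 * M * \<bar>c - d\<bar> * \<bar>b - a\<bar>"
    if "t j \<le> c" "c \<le> t (j + 1)" "t j \<le> d" "d \<le> t (j + 1)" for a b c d j
  proof (rule norm_additive_le_if_cellwise[OF s, where D = "\<lambda>a b. mixed_diff (coons s t N) a b c d"])
    show "mixed_diff (coons s t N) a b c d + mixed_diff (coons s t N) b e c d = mixed_diff (coons s t N) a e c d"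
      for a b e by (rule mixed_diff_add_left)
    fix i a b
    assume ab: "s i \<le> a" "a \<le> b" "b \<le> s (i + 1)"
    have "coons s t N p q = coons_rect (s i) (s (i + 1)) (t j) (t (j + 1)) N p q"
      if "p = a \<or> p = b" "q = c \<or> q = d" for p q
      using that ab \<open>t j \<le> c\<close> \<open>c \<le> t (j + 1)\<close> \<open>t j \<le> d\<close> \<open>d \<le> t (j + 1)\<close>
      by (intro coons_eq_coons_rect[OF s t]) auto
    then have "mixed_diff (coons s t N) a b c d = mixed_diff (coons_rect (s i) (s (i + 1)) (t j) (t (j + 1)) N) a b c d"
      unfolding mixed_diff_def by simp
    also have "norm \<dots> \<le> 3 * M * \<bar>a - b\<bar> * \<bar>c - d\<bar>"
      using less N by (intro norm_mixed_diff_coons_rect_le) auto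
    also have "\<dots> = 3 * M * \<bar>c - d\<bar> * (b - a)"
      using ab by (simp add: abs_minus_commute mult_ac)
    finally show "norm (mixed_diff (coons s t N) a b c d) \<le> 3 * M * \<bar>c - d\<bar> * (b - a)" .
  qed
  have "norm (mixed_diff (coons s t N) a b c d) \<le> 3 * M * \<bar>a - b\<bar> * \<bar>d - c\<bar>"
  proof (rule norm_additive_le_if_cellwise[OF t, where D = "\<lambda>c d. mixed_diff (coons s t N) a b c d"])
    show "mixed_diff (coons s t N) a b c d + mixed_diff (coons s t N) a b d e = mixed_diff (coons s t N) a b c e"
      for c d e by (rule mixed_diff_add_right)
    fix j c d
    assume cd: "t j \<le> c" "c \<le> d" "d \<le> t (j + 1)"
    have "norm (mixed_diff (coons s t N) a b c d) \<le> 3 * M * \<bar>c - d\<bar> * \<bar>b - a\<bar>"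
      by (rule in_cells[of j]) (use cd in auto)
    also have "\<dots> = 3 * M * \<bar>a - b\<bar> * (d - c)"
      using cd by (simp add: abs_minus_commute mult_ac)
    finally show "norm (mixed_diff (coons s t N) a b c d) \<le> 3 * M * \<bar>a - b\<bar> * (d - c)" .
  qed
  then show ?thesis by (simp add: abs_minus_commute)
qed

lemma relative_position_bounds:
  fixes a b z :: real
  assumes "a \<le> z" "z \<le> b"
  shows "0 \<le> (z - a) / (b - a) \<and> (z - a) / (b - a) \<le> 1"
proof (cases "a = b")
  case False
  with assms have "a < b" by simp
  with assms show ?thesis by (simp add: divide_le_eq_1)
qed simp

lemma norm_coons_rect_error_le:
  assumes x: "s0 \<le> x" "x \<le> s1" and y: "t0 \<le> y" "y \<le> t1"
    and N: "\<And>a b c d. norm (mixed_diff N a b c d) \<le> K * \<bar>a - b\<bar> * \<bar>c - d\<bar>"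
  shows "norm (N x y - coons_rect s0 s1 t0 t1 N x y) \<le> K * (s1 - s0) * (t1 - t0)"
proof -
  define u where "u = (x - s0) / (s1 - s0)"
  define v where "v = (y - t0) / (t1 - t0)"
  have u: "0 \<le> u" "u \<le> 1" and v: "0 \<le> v" "v \<le> 1"
    using relative_position_bounds[OF x] relative_position_bounds[OF y] by (simp_all add: u_def v_def)
  have "N x y - coons_rect s0 s1 t0 t1 N x y =
      ((1 - u) * (1 - v)) *\<^sub>R mixed_diff N x s0 y t0 + ((1 - u) * v) *\<^sub>R mixed_diff N x s0 y t1
      + (u * (1 - v)) *\<^sub>R mixed_diff N x s1 y t0 + (u * v) *\<^sub>R mixed_diff N x s1 y t1"
    unfolding coons_rect_def Let_def u_def[symmetric] v_def[symmetric] mixed_diff_def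
    by (simp add: algebra_simps)
  also have "norm \<dots> \<le> (1 - u) * (1 - v) * (K * (s1 - s0) * (t1 - t0)) + (1 - u) * v * (K * (s1 - s0) * (t1 - t0))
      + u * (1 - v) * (K * (s1 - s0) * (t1 - t0)) + u * v * (K * (s1 - s0) * (t1 - t0))"
  proof -
    have K: "0 \<le> K" using N by (rule mixed_diff_bound_nonneg)
    have "norm (w *\<^sub>R mixed_diff N x p y q) \<le> w * (K * (s1 - s0) * (t1 - t0))"
      if "0 \<le> w" "p = s0 \<or> p = s1" "q = t0 \<or> q = t1" for w p q
    proof -
      have "\<bar>x - p\<bar> \<le> s1 - s0" "\<bar>y - q\<bar> \<le> t1 - t0"
        using that(2,3) x y by auto
      then have "K * \<bar>x - p\<bar> * \<bar>y - q\<bar> \<le> K * (s1 - s0) * (t1 - t0)"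
        using K by (intro mult_mono mult_left_mono) auto
      then have "norm (mixed_diff N x p y q) \<le> K * (s1 - s0) * (t1 - t0)"
        using N[of x p y q] by linarith
      then show ?thesis
        using that(1) by (simp add: mult_left_mono)
    qed
    then show ?thesis
      using u v by (intro order_trans[OF norm_triangle_ineq] add_mono) auto
  qed
  also have "\<dots> = K * (s1 - s0) * (t1 - t0)" by (simp add: algebra_simps)
  finally show ?thesis .
qed

lemma norm_coons_error_le:
  assumes s: "grid_lines s" and t: "grid_lines t"
    and mesh: "\<And>i. s (i + 1) - s i \<le> H1" "\<And>j. t (j + 1) - t j \<le> H2"
    and N: "\<And>a b c d. norm (mixed_diff N a b c d) \<le> K * \<bar>a - b\<bar> * \<bar>c - d\<bar>"
  shows "norm (coons s t N x y - N x y) \<le> K * H1 * H2"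
proof -
  define i where "i = cell s x"
  define j where "j = cell t y"
  have x: "s i \<le> x" "x \<le> s (i + 1)" and y: "t j \<le> y" "y \<le> t (j + 1)"
    using cell_bounds[OF s, of x] cell_bounds[OF t, of y] by (auto simp: i_def j_def)
  have "norm (coons s t N x y - N x y) = norm (N x y - coons_rect (s i) (s (i + 1)) (t j) (t (j + 1)) N x y)"
    by (simp add: coons_eq_coons_rect[OF s t x y] norm_minus_commute)
  also have "\<dots> \<le> K * (s (i + 1) - s i) * (t (j + 1) - t j)"
    using x y N by (rule norm_coons_rect_error_le)
  also have "\<dots> \<le> K * H1 * H2"
    using mixed_diff_bound_nonneg[OF N] mesh[of i] mesh[of j] x y
    by (intro mult_mono mult_left_mono) auto
  finally show ?thesis .
qed

lemma weightsD:
  assumes "w \<in> weights"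
  shows "0 < fst w i" "fst w i < snd w i" "snd w i < 1"
proof -
  obtain \<delta> where "\<delta> > 0" "\<forall>i. \<delta> \<le> fst w i \<and> \<delta> \<le> 1 - snd w i \<and> \<delta> \<le> snd w i - fst w i"
    using assms by (cases w) (auto simp: weights_def)
  then show "0 < fst w i" "fst w i < snd w i" "snd w i < 1"
    by (meson less_le_trans diff_gt_0_iff_gt)+
qed

lemma mu_term_le_2:
  assumes "w \<in> weights"
  shows "max (snd w i - fst w i) (1 - snd w (i - 1) + fst w i) \<le> 2"
  using weightsD[OF assms, of i] weightsD[OF assms, of "i - 1"] by auto

lemma mu_upper:
  assumes "w \<in> weights"
  shows "snd w i - fst w i \<le> mu w" "1 - snd w (i - 1) + fst w i \<le> mu w"
proof -
  have "max (snd w i - fst w i) (1 - snd w (i - 1) + fst w i) \<le> mu w"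
    unfolding mu_def using mu_term_le_2[OF assms] by (intro cSUP_upper bdd_aboveI2) auto
  then show "snd w i - fst w i \<le> mu w" "1 - snd w (i - 1) + fst w i \<le> mu w"
    by simp_all
qed

lemma mu_pos: "w \<in> weights \<Longrightarrow> 0 < mu w"
  using mu_upper(1)[of w 0] weightsD(2)[of w 0] by linarith

lemma mu_le_2:
  assumes "w \<in> weights"
  shows "mu w \<le> 2"
  unfolding mu_def by (rule cSUP_least) (simp, rule mu_term_le_2[OF assms])

lemma refine_gap:
  "refine w s (i + 1) - refine w s i =
    (if even i then (snd w (i div 2) - fst w (i div 2)) * (s (i div 2 + 1) - s (i div 2))
     else fst w (i div 2 + 1) * (s (i div 2 + 2) - s (i div 2 + 1))
        + (1 - snd w (i div 2)) * (s (i div 2 + 1) - s (i div 2)))"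
proof (cases "even i")
  case True
  then have "(i + 1) div 2 = i div 2" "odd (i + 1)" by auto
  with True show ?thesis by (simp add: refine_def Let_def algebra_simps)
next
  case False
  then have "(i + 1) div 2 = i div 2 + 1" "even (i + 1)" by (auto elim: oddE)
  with False show ?thesis by (simp add: refine_def Let_def algebra_simps)
qed

lemma refine_even_between:
  assumes "w \<in> weights" "s m \<le> s (m + 1)"
  shows "s m \<le> refine w s (2 * m)" "refine w s (2 * m) \<le> s (m + 1)"
proof -
  have "refine w s (2 * m) = s m + fst w m * (s (m + 1) - s m)"
    by (simp add: refine_def algebra_simps)
  moreover have "0 \<le> fst w m * (s (m + 1) - s m)" "fst w m * (s (m + 1) - s m) \<le> s (m + 1) - s m"
    using weightsD[OF assms(1), of m] assms(2) by (auto intro: mult_left_le_one_le)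
  ultimately show "s m \<le> refine w s (2 * m)" "refine w s (2 * m) \<le> s (m + 1)" by linarith+
qed

lemma grid_lines_refine:
  assumes w: "w \<in> weights" and s: "grid_lines s"
  shows "grid_lines (refine w s)"
proof -
  have less: "s m < s (m + 1)" for m using s by (simp add: grid_lines_def)
  have "0 < refine w s (i + 1) - refine w s i" for i
    using weightsD[OF w, of "i div 2"] weightsD[OF w, of "i div 2 + 1"]
      less[of "i div 2"] less[of "i div 2 + 1"]
    by (simp add: refine_gap add_pos_pos add.assoc)
  moreover have "\<exists>i. refine w s i \<le> x" for x
  proof -
    obtain m where "s (m + 1) \<le> x"
      using s unfolding grid_lines_def by (metis add.commute diff_add_cancel)
    then have "refine w s (2 * m) \<le> x"
      using refine_even_between(2)[OF w less_imp_le[OF less[of m]]] by linarith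
    then show ?thesis by blast
  qed
  moreover have "\<exists>i. x < refine w s i" for x
  proof -
    obtain m where "x < s m" using s unfolding grid_lines_def by blast
    then have "x < refine w s (2 * m)"
      using refine_even_between(1)[OF w less_imp_le[OF less[of m]]] by linarith
    then show ?thesis by blast
  qed
  ultimately show ?thesis by (simp add: grid_lines_def)
qed

lemma refine_mesh_le:
  assumes w: "w \<in> weights" and s: "grid_lines s" and mesh: "\<And>i. s (i + 1) - s i \<le> H"
  shows "refine w s (i + 1) - refine w s i \<le> mu w * H"
proof -
  have gap: "0 < s (m + 1) - s m" for m using s by (simp add: grid_lines_def)
  have H: "0 \<le> H" using gap[of 0] mesh[of 0] by linarith
  let ?m = "i div 2"
  show ?thesis
  proof (cases "even i")
    case True
    have "(snd w ?m - fst w ?m) * (s (?m + 1) - s ?m) \<le> mu w * H"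
      using mu_upper(1)[OF w, of ?m] weightsD[OF w, of ?m] mesh[of ?m] gap[of ?m] mu_pos[OF w] H
      by (intro mult_mono) auto
    with True show ?thesis by (simp add: refine_gap)
  next
    case False
    have "fst w (?m + 1) * (s (?m + 2) - s (?m + 1)) + (1 - snd w ?m) * (s (?m + 1) - s ?m)
        \<le> fst w (?m + 1) * H + (1 - snd w ?m) * H"
      using weightsD[OF w, of ?m] weightsD[OF w, of "?m + 1"] mesh[of ?m] mesh[of "?m + 1"]
      by (intro add_mono mult_left_mono) (auto simp: add.assoc)
    also have "\<dots> = (1 - snd w (?m + 1 - 1) + fst w (?m + 1)) * H" by (simp add: algebra_simps)
    also have "\<dots> \<le> mu w * H" using mu_upper(2)[OF w, of "?m + 1"] H by (rule mult_right_mono)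
    finally show ?thesis using False by (simp add: refine_gap)
  qed
qed

lemma grid_lines_lines:
  assumes "\<And>k. w k \<in> weights"
  shows "grid_lines (lines w k)"
proof (induction k)
  case 0
  have "\<exists>i. real_of_int i \<le> x" "\<exists>i. x < real_of_int i" for x :: real
    by (rule exI[of _ "\<lfloor>x\<rfloor>"], simp) (rule exI[of _ "\<lfloor>x\<rfloor> + 1"], linarith)
  then show ?case by (simp add: grid_lines_def)
next
  case (Suc k)
  then show ?case using assms by (simp add: grid_lines_refine)
qed

lemma lines_mesh_le:
  assumes w: "\<And>k. w k \<in> weights" and m: "\<And>k. mu (w k) \<le> m"
  shows "lines w k (i + 1) - lines w k i \<le> m ^ k"
proof (induction k arbitrary: i)
  case 0
  then show ?case by simp
next
  case (Suc k)
  have "lines w (Suc k) (i + 1) - lines w (Suc k) i \<le> mu (w k) * m ^ k"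
    using refine_mesh_le[OF w grid_lines_lines[OF w] Suc.IH] by simp
  also have "\<dots> \<le> m * m ^ k"
    using m[of k] m[of 0] mu_pos[OF w, of 0] by (intro mult_right_mono) auto
  finally show ?case by simp
qed

lemma nets_mixed_diff_bounded:
  assumes ws: "\<And>k. ws k \<in> weights" and wt: "\<And>k. wt k \<in> weights"
    and N0: "mixed_diff_bounded_on_grid real_of_int real_of_int N0 M"
  shows "mixed_diff_bounded_on_grid (lines ws k) (lines wt k) (nets ws wt N0 k) (3 ^ k * M)"
proof (induction k)
  case 0
  then show ?case using N0 by simp
next
  case (Suc k)
  then show ?case
    using norm_mixed_diff_coons_le[OF grid_lines_lines[OF ws] grid_lines_lines[OF wt] Suc.IH]
    by (simp add: mixed_diff_bounded_on_grid_def mult.assoc)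
qed

lemma norm_coons_nets_increment_le:
  fixes N0 :: "real \<Rightarrow> real \<Rightarrow> 'a::real_normed_vector"
  assumes ws: "\<And>k. ws k \<in> weights" and wt: "\<And>k. wt k \<in> weights"
    and ms: "\<And>k. mu (ws k) \<le> m" and mt: "\<And>k. mu (wt k) \<le> m"
    and N0: "mixed_diff_bounded_on_grid real_of_int real_of_int N0 M"
  shows "norm (coons (lines ws (Suc k)) (lines wt (Suc k)) (nets ws wt N0 (Suc k)) x y
      - coons (lines ws k) (lines wt k) (nets ws wt N0 k) x y) \<le> M * (3 * m\<^sup>2) ^ Suc k"
proof -
  have "norm (mixed_diff (nets ws wt N0 (Suc k)) a b c d) \<le> 3 ^ Suc k * M * \<bar>a - b\<bar> * \<bar>c - d\<bar>" for a b c d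
    using norm_mixed_diff_coons_le[OF grid_lines_lines[OF ws] grid_lines_lines[OF wt]
        nets_mixed_diff_bounded[OF ws wt N0, where k = k]]
    by (simp add: mult.assoc)
  then have "norm (coons (lines ws (Suc k)) (lines wt (Suc k)) (nets ws wt N0 (Suc k)) x y
      - nets ws wt N0 (Suc k) x y) \<le> 3 ^ Suc k * M * m ^ Suc k * m ^ Suc k"
    by (intro norm_coons_error_le grid_lines_lines lines_mesh_le ws wt ms mt)
  also have "\<dots> = M * (3 * m\<^sup>2) ^ Suc k"
    by (simp add: power_mult_distrib power2_eq_square)
  finally show ?thesis by simp
qed

lemma uniform_limit_if_summable_increments:
  fixes F :: "nat \<Rightarrow> 'a \<Rightarrow> 'b::banach"
  assumes increments: "\<And>k x. x \<in> X \<Longrightarrow> norm (F (Suc k) x - F k x) \<le> B k" and "summable B"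
  shows "\<exists>G. uniform_limit X F G sequentially"
proof -
  have "uniform_limit X (\<lambda>n x. \<Sum>k<n. F (Suc k) x - F k x) (\<lambda>x. \<Sum>k. F (Suc k) x - F k x) sequentially"
    using increments \<open>summable B\<close> by (rule Weierstrass_m_test)
  then have "uniform_limit X (\<lambda>n x. F 0 x + (\<Sum>k<n. F (Suc k) x - F k x))
      (\<lambda>x. F 0 x + (\<Sum>k. F (Suc k) x - F k x)) sequentially"
    by (intro uniform_limit_add uniform_limit_const)
  moreover have "(\<Sum>k<n. F (Suc k) x - F k x) = F n x - F 0 x" for n x
    using sum_lessThan_telescope[of "\<lambda>k. F k x"] by simp
  ultimately have "uniform_limit X F (\<lambda>x. F 0 x + (\<Sum>k. F (Suc k) x - F k x)) sequentially"
    by simp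
  then show ?thesis by blast
qed

theorem theorem2:
  fixes N0 :: "real \<Rightarrow> real \<Rightarrow> real ^ 'm"
    and L :: real
    and ws wt :: "nat \<Rightarrow> (int \<Rightarrow> real) \<times> (int \<Rightarrow> real)"
  assumes "C0_net real_of_int real_of_int N0"
    and "has_BMSDD real_of_int real_of_int N0 L"
    and "\<And>k. ws k \<in> weights"
    and "\<And>k. wt k \<in> weights"
    and "(SUP k. max (mu (ws k)) (mu (wt k))) < sqrt 3 / 3"
  shows "\<exists>F. uniform_limit UNIV
           (\<lambda>k (p :: real \<times> real). coons (lines ws k) (lines wt k) (nets ws wt N0 k) (fst p) (snd p))
           F sequentially"
proof -
  define m where "m = (SUP k. max (mu (ws k)) (mu (wt k)))"
  have "max (mu (ws k)) (mu (wt k)) \<le> m" for k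
    unfolding m_def using mu_le_2 assms(3,4) by (intro cSUP_upper bdd_aboveI2[where M = 2]) auto
  then have ms: "mu (ws k) \<le> m" and mt: "mu (wt k) \<le> m" for k by auto
  have "0 < m" using ms[of 0] mu_pos[OF assms(3), of 0] by linarith
  have "m\<^sup>2 < (sqrt 3 / 3)\<^sup>2"
    using \<open>0 < m\<close> assms(5) by (intro power_strict_mono) (auto simp: m_def)
  then have ratio: "\<bar>3 * m\<^sup>2\<bar> < 1" by (simp add: power_divide)
  define M where "M = sqrt DIM(real ^ 'm) * L"
  have N0: "mixed_diff_bounded_on_grid real_of_int real_of_int N0 M"
    unfolding M_def using assms(2) by (rule mixed_diff_bounded_on_grid_if_has_BMSDD)
  show ?thesis
  proof (rule uniform_limit_if_summable_increments[where B = "\<lambda>k. M * (3 * m\<^sup>2) * (3 * m\<^sup>2) ^ k"])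
    show "norm (coons (lines ws (Suc k)) (lines wt (Suc k)) (nets ws wt N0 (Suc k)) (fst p) (snd p)
        - coons (lines ws k) (lines wt k) (nets ws wt N0 k) (fst p) (snd p)) \<le> M * (3 * m\<^sup>2) * (3 * m\<^sup>2) ^ k"
      for k p
      using norm_coons_nets_increment_le[OF assms(3,4) ms mt N0] by (simp add: mult.assoc)
    show "summable (\<lambda>k. M * (3 * m\<^sup>2) * (3 * m\<^sup>2) ^ k)"
      using ratio by (intro summable_mult summable_geometric) simp
  qed
qed

end
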